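(* Let $s\in(\frac12,1)$, $\Omega\subset\mathbb R^N$, and let $(u_n)$ be a sequence of subsolutions [resp. supersolutions] at non-zero gradient points in $\Omega$. Assume that $u_n$ converges uniformly to a function $u_0$, and that there exist $\alpha<2s$ and $C>0$ such that $|u_n(x)|\le C(1+|x|)^\alpha$ for all $n$ and all $x$. Then $u_0$ is a subsolution [resp. supersolution] at non-zero gradient points in $\Omega$.
   Context: $S^{N-1}$ unit sphere. $\phi\in C^{1,1}(x_0)$ means there are $p\in\mathbb R^N$, $M,\eta_0>0$ with $|\phi(x_0+x)-\phi(x_0)-p\cdot x|\le M|x|^2$ for $|x|<\eta_0$; $\nabla\phi(x_0):=p$. For such $\phi$ with $\nabla\phi(x)\ne0$ and $v=\nabla\phi(x)/|\nabla\phi(x)|$, the infinity fractional Laplacian is $\Delta^s_\infty\phi(x)=\int_0^\infty\frac{\phi(x+\eta v)+\phi(x-\eta v)-2\phi(x)}{\eta^{1+2s}}d\eta$. An upper [lower] semicontinuous $u:\mathbb R^N\to\mathbb R$ is a subsolution [supersolution] at non-zero gradient points in $\Omega$ if for every $x_0\in\Omega$, whenever $r>0$, $\phi\in C^{1,1}(x_0)\cap C(\overline{B_r(x_0)})$ with $\nabla\phi(x_0)\ne0$, $\phi(x_0)=u(x_0)$ and $\phi>u$ [$\phi<u$] on $B_r(x_0)\setminus\{x_0\}$, the function $\tilde u$ equal to $\phi$ on $B_r(x_0)$ and to $u$ elsewhere satisfies $\Delta^s_\infty\tilde u(x_0)\ge0$ [$\le0$]. *)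

theory Defs
  imports "HOL-Analysis.Analysis"
begin

definition usc :: "('a::euclidean_space \<Rightarrow> real) \<Rightarrow> bool" where
  "usc u \<longleftrightarrow> (\<forall>x t. u x < t \<longrightarrow> (\<forall>\<^sub>F y in at x. u y < t))"

definition lsc :: "('a::euclidean_space \<Rightarrow> real) \<Rightarrow> bool" where
  "lsc u \<longleftrightarrow> (\<forall>x t. t < u x \<longrightarrow> (\<forall>\<^sub>F y in at x. t < u y))"

definition C11_at :: "('a::euclidean_space \<Rightarrow> real) \<Rightarrow> 'a \<Rightarrow> 'a \<Rightarrow> bool" where
  "C11_at \<phi> x0 p \<longleftrightarrow> (\<exists>M \<eta>0. M > 0 \<and> \<eta>0 > 0 \<and>
      (\<forall>x. norm x < \<eta>0 \<longrightarrow> \<bar>\<phi> (x0 + x) - \<phi> x0 - p \<bullet> x\<bar> \<le> M * (norm x)\<^sup>2))"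

definition frac_integrand :: "real \<Rightarrow> ('a::euclidean_space \<Rightarrow> real) \<Rightarrow> 'a \<Rightarrow> 'a \<Rightarrow> real \<Rightarrow> real" where
  "frac_integrand s w x v \<eta> = (w (x + \<eta> *\<^sub>R v) + w (x - \<eta> *\<^sub>R v) - 2 * w x) / \<eta> powr (1 + 2 * s)"

definition fraclap_pos :: "real \<Rightarrow> ('a::euclidean_space \<Rightarrow> real) \<Rightarrow> 'a \<Rightarrow> 'a \<Rightarrow> ennreal" where
  "fraclap_pos s w x v = (\<integral>\<^sup>+ \<eta>\<in>{0<..}. ennreal (frac_integrand s w x v \<eta>) \<partial>lborel)"

definition fraclap_neg :: "real \<Rightarrow> ('a::euclidean_space \<Rightarrow> real) \<Rightarrow> 'a \<Rightarrow> 'a \<Rightarrow> ennreal" where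
  "fraclap_neg s w x v = (\<integral>\<^sup>+ \<eta>\<in>{0<..}. ennreal (- frac_integrand s w x v \<eta>) \<partial>lborel)"

(* "\<Delta>^s_\<infinity> w(x) \<ge> 0" with v = \<nabla>phi(x)/|\<nabla>phi(x)|: the integral is well defined in
   [-\<infinity>,+\<infinity>] (negative part finite) and nonnegative. *)
definition fraclap_ge0 :: "real \<Rightarrow> ('a::euclidean_space \<Rightarrow> real) \<Rightarrow> 'a \<Rightarrow> 'a \<Rightarrow> bool" where
  "fraclap_ge0 s w x v \<longleftrightarrow> fraclap_neg s w x v < \<infinity> \<and> fraclap_neg s w x v \<le> fraclap_pos s w x v"

definition fraclap_le0 :: "real \<Rightarrow> ('a::euclidean_space \<Rightarrow> real) \<Rightarrow> 'a \<Rightarrow> 'a \<Rightarrow> bool" where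
  "fraclap_le0 s w x v \<longleftrightarrow> fraclap_pos s w x v < \<infinity> \<and> fraclap_pos s w x v \<le> fraclap_neg s w x v"

definition subsol_nzg :: "real \<Rightarrow> 'a::euclidean_space set \<Rightarrow> ('a \<Rightarrow> real) \<Rightarrow> bool" where
  "subsol_nzg s \<Omega> u \<longleftrightarrow> usc u \<and>
     (\<forall>x0\<in>\<Omega>. \<forall>r \<phi> p. r > 0 \<and> C11_at \<phi> x0 p \<and> continuous_on (cball x0 r) \<phi> \<and> p \<noteq> 0
        \<and> \<phi> x0 = u x0 \<and> (\<forall>x\<in>ball x0 r - {x0}. \<phi> x > u x)
        \<longrightarrow> fraclap_ge0 s (\<lambda>x. if x \<in> ball x0 r then \<phi> x else u x) x0 (p /\<^sub>R norm p))"

definition supersol_nzg :: "real \<Rightarrow> 'a::euclidean_space set \<Rightarrow> ('a \<Rightarrow> real) \<Rightarrow> bool" where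
  "supersol_nzg s \<Omega> u \<longleftrightarrow> lsc u \<and>
     (\<forall>x0\<in>\<Omega>. \<forall>r \<phi> p. r > 0 \<and> C11_at \<phi> x0 p \<and> continuous_on (cball x0 r) \<phi> \<and> p \<noteq> 0
        \<and> \<phi> x0 = u x0 \<and> (\<forall>x\<in>ball x0 r - {x0}. \<phi> x < u x)
        \<longrightarrow> fraclap_le0 s (\<lambda>x. if x \<in> ball x0 r then \<phi> x else u x) x0 (p /\<^sub>R norm p))"

end

(*
  Let a test function phi touch u0 from above at x0 with gradient p. Near x0, u0 then lies below a
  paraboloid, and after adding |y - x0|^2 the point x0 becomes a strict maximum of u0 - psi. By
  uniform convergence the maximizers X n of u n - psi converge to x0 with u n (X n) -> u0 x0, and a
  paraboloid with gradient P n -> p touches u n from above at X n, so the subsolution property of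
  u n applies there. The resulting integrands are dominated uniformly in n, by eta^(1-2s) near 0
  (second-order touching, s < 1) and by eta^(max alpha 0 - 1 - 2s) near infinity (growth alpha < 2s),
  and their limsup is at most the integrand of the limit problem (upper semicontinuity of u0).
  Fatou's lemma for the negative parts and the reverse Fatou lemma for the positive parts then give
  the inequality at x0. Supersolutions are subsolutions of the negated problem.
*)

theory Submission
  imports Defs
begin

section \<open>Upper semicontinuous functions\<close>

lemma usc_open_sublevel: "usc f \<Longrightarrow> open {x. f x < t}"
  unfolding usc_def open_subopen[of "{x. f x < t}"]
proof (intro ballI)
  fix x assume "\<forall>x t. f x < t \<longrightarrow> (\<forall>\<^sub>F y in at x. f y < t)" and x: "x \<in> {x. f x < t}"
  then have "\<forall>\<^sub>F y in at x. f y < t" by auto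
  then obtain S where "open S" "x \<in> S" "\<forall>y\<in>S. y \<noteq> x \<longrightarrow> f y < t"
    unfolding eventually_at_topological by blast
  then show "\<exists>T. open T \<and> x \<in> T \<and> T \<subseteq> {x. f x < t}"
    using x by (intro exI[of _ S]) auto
qed

lemma usc_borel_measurable: "usc f \<Longrightarrow> f \<in> borel_measurable borel"
  unfolding borel_measurable_iff_less by (auto intro!: borel_open usc_open_sublevel)

lemma usc_tendsto_less:
  assumes "usc f" "(X \<longlongrightarrow> a) F" "e > 0"
  shows "\<forall>\<^sub>F n in F. f (X n) < f a + e"
proof -
  have "\<forall>\<^sub>F y in at a. f y < f a + e"
    using assms(1,3) unfolding usc_def by auto
  then have "\<forall>\<^sub>F y in nhds a. f y < f a + e"
    using assms(3) unfolding eventually_at_filter by (auto elim: eventually_mono)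
  then show ?thesis
    using assms(2) by (rule eventually_compose_filterlim)
qed

lemma usc_diff_continuous:
  assumes "usc f" "continuous_on UNIV g"
  shows "usc (\<lambda>x. f x - g x)"
  unfolding usc_def
proof (intro allI impI)
  fix x t assume "f x - g x < t"
  define d where "d = t - (f x - g x)"
  have d: "d > 0" using \<open>f x - g x < t\<close> by (simp add: d_def)
  have "\<forall>\<^sub>F y in at x. f y < f x + d/2"
    using assms(1) d unfolding usc_def by auto
  moreover have "\<forall>\<^sub>F y in at x. g x - d/2 < g y"
    using assms(2) d by (intro order_tendstoD(1)) (auto simp: continuous_on_def)
  ultimately show "\<forall>\<^sub>F y in at x. f y - g y < t"
    by eventually_elim (use d_def in linarith)
qed

lemma usc_attains_max:
  assumes "usc f" "compact K" "K \<noteq> {}"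
  shows "\<exists>x\<in>K. \<forall>y\<in>K. f y \<le> f x"
proof (rule ccontr)
  assume "\<not> ?thesis"
  then have "K \<subseteq> (\<Union>y\<in>K. {x. f x < f y})" by (auto simp: not_le)
  then obtain D where D: "D \<subseteq> K" "finite D" "K \<subseteq> (\<Union>y\<in>D. {x. f x < f y})"
    using compactE_image[OF assms(2), of K "\<lambda>y. {x. f x < f y}"] usc_open_sublevel[OF assms(1)]
    by auto
  then have "D \<noteq> {}" using assms(3) by auto
  then have "Max (f ` D) \<in> f ` D"
    using \<open>finite D\<close> by (intro Max_in) auto
  then obtain z where "z \<in> D" "f z = Max (f ` D)"
    by (metis imageE)
  then have "\<forall>y\<in>D. f y \<le> f z"
    using \<open>finite D\<close> by auto
  moreover obtain y where "y \<in> D" "f z < f y"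
    using D \<open>z \<in> D\<close> by blast
  ultimately show False by (meson not_le)
qed

lemma usc_uniform_limit:
  assumes usc: "\<And>n. usc (u n)" and lim: "uniform_limit UNIV u u0 sequentially"
  shows "usc u0"
  unfolding usc_def
proof (intro allI impI)
  fix x t assume "u0 x < t"
  define d where "d = t - u0 x"
  have d: "d > 0" using \<open>u0 x < t\<close> d_def by simp
  obtain n where n: "\<forall>y. dist (u n y) (u0 y) < d/3"
    using eventually_happens[OF lim[unfolded uniform_limit_iff, rule_format, of "d/3"]] d by auto
  have "\<forall>\<^sub>F y in at x. u n y < u n x + d/3"
    using usc d unfolding usc_def by auto
  then show "\<forall>\<^sub>F y in at x. u0 y < t"
  proof (rule eventually_mono)
    fix y assume "u n y < u n x + d/3"
    moreover have "\<bar>u n y - u0 y\<bar> < d/3" "\<bar>u n x - u0 x\<bar> < d/3"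
      using n by (simp_all add: dist_real_def)
    ultimately show "u0 y < t"
      unfolding abs_less_iff d_def by argo
  qed
qed

lemma lsc_iff_usc_uminus: "lsc u \<longleftrightarrow> usc (\<lambda>x. - u x)"
  unfolding lsc_def usc_def
proof (intro iffI allI impI)
  fix x t assume "\<forall>x t. t < u x \<longrightarrow> (\<forall>\<^sub>F y in at x. t < u y)" "- u x < t"
  then have "\<forall>\<^sub>F y in at x. - t < u y" by auto
  then show "\<forall>\<^sub>F y in at x. - u y < t" by (rule eventually_mono) auto
next
  fix x t assume "\<forall>x t. - u x < t \<longrightarrow> (\<forall>\<^sub>F y in at x. - u y < t)" "t < u x"
  moreover have "- u x < - t" using \<open>t < u x\<close> by simp
  ultimately have "\<forall>\<^sub>F y in at x. - u y < - t" by blast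
  then show "\<forall>\<^sub>F y in at x. t < u y" by (rule eventually_mono) auto
qed

section \<open>Limits of integrals over the positive half-line\<close>

lemma ennreal_uminus_le_Liminf:
  fixes f :: "'i \<Rightarrow> real"
  assumes "\<And>e. e > 0 \<Longrightarrow> \<forall>\<^sub>F n in F. f n < g + e"
  shows "ennreal (- g) \<le> Liminf F (\<lambda>n. ennreal (- f n))"
  unfolding le_Liminf_iff
proof (intro allI impI)
  fix y assume "y < ennreal (- g)"
  then obtain y0 where y0: "y = ennreal y0" "0 \<le> y0" "y0 < - g"
    by (cases y) (auto simp: ennreal_less_iff)
  have "\<forall>\<^sub>F n in F. f n < g + (- g - y0)"
    using assms[of "- g - y0"] y0 by simp
  then show "\<forall>\<^sub>F n in F. y < ennreal (- f n)"
    by eventually_elim (use y0 in \<open>auto intro!: ennreal_lessI\<close>)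
qed

lemma Limsup_ennreal_le:
  fixes f :: "'i \<Rightarrow> real"
  assumes "\<And>e. e > 0 \<Longrightarrow> \<forall>\<^sub>F n in F. f n < g + e"
  shows "Limsup F (\<lambda>n. ennreal (f n)) \<le> ennreal g"
  unfolding Limsup_le_iff
proof (intro allI impI)
  fix y assume y: "ennreal g < y"
  show "\<forall>\<^sub>F n in F. ennreal (f n) < y"
  proof (cases "y = \<infinity>")
    case True then show ?thesis by (simp add: ennreal_less_top)
  next
    case False
    then obtain y0 where y0: "y = ennreal y0" "0 \<le> y0"
      by (cases y) auto
    then have "0 < y0"
      using y by (metis ennreal_less_zero_iff not_less_iff_gr_or_eq leD zero_le)
    have "g < y0"
      using y y0 \<open>0 < y0\<close> by (cases "g \<ge> 0") (auto simp: ennreal_less_iff)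
    have "\<forall>\<^sub>F n in F. f n < g + (y0 - g)"
      using assms[of "y0 - g"] \<open>g < y0\<close> by simp
    then show ?thesis
      by eventually_elim (use y0 \<open>0 < y0\<close> in \<open>auto intro!: ennreal_lessI\<close>)
  qed
qed

(* Fatou's lemma controls the negative parts, the reverse Fatou lemma (domination by H from above)
   the positive parts. *)
lemma neg_le_pos_integral_upper_limit_forall:
  fixes F :: "nat \<Rightarrow> real \<Rightarrow> real" and G H :: "real \<Rightarrow> real"
  assumes meas: "\<And>n. F n \<in> borel_measurable borel"
    and measH: "H \<in> borel_measurable borel"
    and finH: "(\<integral>\<^sup>+ \<eta>\<in>{0<..}. ennreal (H \<eta>) \<partial>lborel) < \<infinity>"
    and dom: "\<And>n \<eta>. \<eta> > 0 \<Longrightarrow> F n \<eta> \<le> H \<eta>"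
    and ptw: "\<And>\<eta> e. \<eta> > 0 \<Longrightarrow> e > 0 \<Longrightarrow> \<forall>\<^sub>F n in sequentially. F n \<eta> < G \<eta> + e"
    and each: "\<And>n. (\<integral>\<^sup>+ \<eta>\<in>{0<..}. ennreal (- F n \<eta>) \<partial>lborel) \<le> (\<integral>\<^sup>+ \<eta>\<in>{0<..}. ennreal (F n \<eta>) \<partial>lborel)"
  shows "(\<integral>\<^sup>+ \<eta>\<in>{0<..}. ennreal (- G \<eta>) \<partial>lborel) < \<infinity> \<and>
         (\<integral>\<^sup>+ \<eta>\<in>{0<..}. ennreal (- G \<eta>) \<partial>lborel) \<le> (\<integral>\<^sup>+ \<eta>\<in>{0<..}. ennreal (G \<eta>) \<partial>lborel)"
proof -
  note [measurable] = meas measH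
  define P where "P n = (\<integral>\<^sup>+ \<eta>\<in>{0<..}. ennreal (F n \<eta>) \<partial>lborel)" for n
  have liminf_neg: "ennreal (- G \<eta>) * indicator {0<..} \<eta> \<le> liminf (\<lambda>n. ennreal (- F n \<eta>) * indicator {0<..} \<eta>)" for \<eta>
    using ennreal_uminus_le_Liminf[OF ptw, of \<eta>] by (cases "\<eta> > 0") auto
  have limsup_pos: "limsup (\<lambda>n. ennreal (F n \<eta>) * indicator {0<..} \<eta>) \<le> ennreal (G \<eta>) * indicator {0<..} \<eta>" for \<eta>
    using Limsup_ennreal_le[OF ptw, of \<eta>] by (cases "\<eta> > 0") (auto simp: Limsup_const)
  have "(\<integral>\<^sup>+ \<eta>\<in>{0<..}. ennreal (- G \<eta>) \<partial>lborel) \<le> (\<integral>\<^sup>+ \<eta>. liminf (\<lambda>n. ennreal (- F n \<eta>) * indicator {0<..} \<eta>) \<partial>lborel)"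
    by (intro nn_integral_mono liminf_neg)
  also have "\<dots> \<le> liminf (\<lambda>n. \<integral>\<^sup>+ \<eta>\<in>{0<..}. ennreal (- F n \<eta>) \<partial>lborel)"
    by (intro nn_integral_liminf) measurable
  also have "\<dots> \<le> liminf P"
    by (intro Liminf_mono) (auto simp: P_def each)
  finally have neg_le: "(\<integral>\<^sup>+ \<eta>\<in>{0<..}. ennreal (- G \<eta>) \<partial>lborel) \<le> liminf P" .
  have "liminf P \<le> limsup P"
    by (intro Liminf_le_Limsup sequentially_bot)
  also have "limsup P \<le> (\<integral>\<^sup>+ \<eta>. limsup (\<lambda>n. ennreal (F n \<eta>) * indicator {0<..} \<eta>) \<partial>lborel)"
    unfolding P_def using finH
    by (intro nn_integral_limsup[where w="\<lambda>\<eta>. ennreal (H \<eta>) * indicator {0<..} \<eta>"])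
       (auto intro!: AE_I2 mult_right_mono ennreal_leI dom simp: indicator_def)
  also have "\<dots> \<le> (\<integral>\<^sup>+ \<eta>\<in>{0<..}. ennreal (G \<eta>) \<partial>lborel)"
    by (intro nn_integral_mono limsup_pos)
  finally have le_pos: "liminf P \<le> (\<integral>\<^sup>+ \<eta>\<in>{0<..}. ennreal (G \<eta>) \<partial>lborel)" .
  have "limsup P \<le> (\<integral>\<^sup>+ \<eta>\<in>{0<..}. ennreal (H \<eta>) \<partial>lborel)"
    unfolding P_def
    by (intro Limsup_bounded always_eventually allI nn_integral_mono)
       (auto intro!: mult_right_mono ennreal_leI dom simp: indicator_def)
  then have "liminf P < \<infinity>"
    using finH Liminf_le_Limsup[OF sequentially_bot, of P] by (meson order.strict_trans1)
  with neg_le le_pos show ?thesis by (meson order.strict_trans1 order.trans)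
qed

lemma nn_integral_powr_pieces_finite:
  fixes a b c A B :: real
  assumes "a > -1" "b < -1" "c > 0" "A \<ge> 0" "B \<ge> 0"
  shows "(\<integral>\<^sup>+ \<eta>\<in>{0<..}. ennreal (A * \<eta> powr a * indicator {0..c} \<eta> + B * \<eta> powr b * indicator {c..} \<eta>) \<partial>lborel) < \<infinity>"
proof -
  have I1: "((\<lambda>x. A * x powr a) has_integral (A * (c powr (a+1) / (a+1)))) {0..c}"
    using has_integral_powr_from_0[of a c] assms by (intro has_integral_mult_right) auto
  have I2: "((\<lambda>x. B * x powr b) has_integral (B * (-(c powr (b+1)) / (b+1)))) {c..}"
    using has_integral_powr_to_inf[of b c] assms by (intro has_integral_mult_right) auto
  have E1: "(\<integral>\<^sup>+ x. indicator {0..c} x * (A * x powr a) \<partial>lborel) = A * (c powr (a+1) / (a+1))"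
    by (rule nn_integral_has_integral_lebesgue[OF _ I1]) (use assms in auto)
  have E2: "(\<integral>\<^sup>+ x. indicator {c..} x * (B * x powr b) \<partial>lborel) = B * (-(c powr (b+1)) / (b+1))"
    by (rule nn_integral_has_integral_lebesgue[OF _ I2]) (use assms in auto)
  have "(\<integral>\<^sup>+ \<eta>\<in>{0<..}. ennreal (A * \<eta> powr a * indicator {0..c} \<eta> + B * \<eta> powr b * indicator {c..} \<eta>) \<partial>lborel)
      \<le> (\<integral>\<^sup>+ x. (ennreal (indicator {0..c} x * (A * x powr a)) + ennreal (indicator {c..} x * (B * x powr b))) \<partial>lborel)"
  proof (intro nn_integral_mono)
    fix x :: real
    have n1: "0 \<le> indicator {0..c} x * (A * x powr a)" and n2: "0 \<le> indicator {c..} x * (B * x powr b)"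
      using assms by (auto simp: indicator_def)
    have "ennreal (A * x powr a * indicator {0..c} x + B * x powr b * indicator {c..} x) * indicator {0<..} x
       \<le> ennreal (A * x powr a * indicator {0..c} x + B * x powr b * indicator {c..} x)"
      by (simp add: indicator_def)
    also have "\<dots> = ennreal (indicator {0..c} x * (A * x powr a)) + ennreal (indicator {c..} x * (B * x powr b))"
      using ennreal_plus[OF n1 n2] by (simp add: mult.commute)
    finally show "ennreal (A * x powr a * indicator {0..c} x + B * x powr b * indicator {c..} x) * indicator {0<..} x
       \<le> ennreal (indicator {0..c} x * (A * x powr a)) + ennreal (indicator {c..} x * (B * x powr b))" .
  qed
  also have "\<dots> = (\<integral>\<^sup>+ x. indicator {0..c} x * (A * x powr a) \<partial>lborel) + (\<integral>\<^sup>+ x. indicator {c..} x * (B * x powr b) \<partial>lborel)"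
    by (intro nn_integral_add) auto
  also have "\<dots> < \<infinity>" unfolding E1 E2 by simp
  finally show ?thesis .
qed

lemma neg_le_pos_integral_upper_limit:
  fixes F :: "nat \<Rightarrow> real \<Rightarrow> real" and G H :: "real \<Rightarrow> real"
  assumes "\<And>n. F n \<in> borel_measurable borel"
    and "H \<in> borel_measurable borel"
    and "(\<integral>\<^sup>+ \<eta>\<in>{0<..}. ennreal (H \<eta>) \<partial>lborel) < \<infinity>"
    and "\<forall>\<^sub>F n in sequentially. \<forall>\<eta>>0. F n \<eta> \<le> H \<eta>"
    and ptw: "\<And>\<eta> e. \<eta> > 0 \<Longrightarrow> e > 0 \<Longrightarrow> \<forall>\<^sub>F n in sequentially. F n \<eta> < G \<eta> + e"
    and "\<forall>\<^sub>F n in sequentially.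
           (\<integral>\<^sup>+ \<eta>\<in>{0<..}. ennreal (- F n \<eta>) \<partial>lborel) \<le> (\<integral>\<^sup>+ \<eta>\<in>{0<..}. ennreal (F n \<eta>) \<partial>lborel)"
  shows "(\<integral>\<^sup>+ \<eta>\<in>{0<..}. ennreal (- G \<eta>) \<partial>lborel) < \<infinity> \<and>
         (\<integral>\<^sup>+ \<eta>\<in>{0<..}. ennreal (- G \<eta>) \<partial>lborel) \<le> (\<integral>\<^sup>+ \<eta>\<in>{0<..}. ennreal (G \<eta>) \<partial>lborel)"
proof -
  obtain N where N: "\<And>n. n \<ge> N \<Longrightarrow> (\<forall>\<eta>>0. F n \<eta> \<le> H \<eta>) \<and>
      (\<integral>\<^sup>+ \<eta>\<in>{0<..}. ennreal (- F n \<eta>) \<partial>lborel) \<le> (\<integral>\<^sup>+ \<eta>\<in>{0<..}. ennreal (F n \<eta>) \<partial>lborel)"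
    using eventually_conj[OF assms(4,6)] unfolding eventually_sequentially by blast
  show ?thesis
  proof (rule neg_le_pos_integral_upper_limit_forall[of "\<lambda>k. F (k + N)" H])
    show "\<forall>\<^sub>F k in sequentially. F (k + N) \<eta> < G \<eta> + e" if "\<eta> > 0" "e > 0" for \<eta> e
      using ptw[OF that] by (rule eventually_sequentially_seg[THEN iffD2])
  qed (use assms(1-3) N in auto)
qed

section \<open>Supersolutions\<close>

lemma frac_integrand_uminus: "frac_integrand s (\<lambda>y. - w y) x (-v) \<eta> = - frac_integrand s w x v \<eta>"
  unfolding frac_integrand_def by (simp add: algebra_simps minus_divide_left[symmetric] diff_divide_distrib)

lemma fraclap_le0_iff_ge0_uminus: "fraclap_le0 s w x v \<longleftrightarrow> fraclap_ge0 s (\<lambda>y. - w y) x (-v)"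
  unfolding fraclap_le0_def fraclap_ge0_def fraclap_pos_def fraclap_neg_def frac_integrand_uminus by simp

lemma C11_at_uminus: "C11_at (\<lambda>x. - \<phi> x) x0 (-p) \<longleftrightarrow> C11_at \<phi> x0 p"
proof -
  have "\<bar>- \<phi> (x0 + x) - - \<phi> x0 - (-p) \<bullet> x\<bar> = \<bar>\<phi> (x0 + x) - \<phi> x0 - p \<bullet> x\<bar>" for x
    by (simp add: abs_minus_commute algebra_simps inner_minus_left)
  then show ?thesis unfolding C11_at_def by simp
qed

lemma supersol_nzg_iff_subsol_nzg_uminus: "supersol_nzg s \<Omega> u \<longleftrightarrow> subsol_nzg s \<Omega> (\<lambda>x. - u x)"
proof -
  have eq1: "(\<lambda>y. - (if y \<in> B then - \<phi> y else u y)) = (\<lambda>y. if y \<in> B then \<phi> y else - u y)" for B \<phi>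
    by auto
  have eq2: "- ((- p) /\<^sub>R norm (- p)) = p /\<^sub>R norm p" for p :: 'a by simp
  have eq3: "(\<lambda>y. - (if y \<in> B then \<phi> y else u y)) = (\<lambda>y. if y \<in> B then - \<phi> y else - u y)" for B \<phi>
    by auto
  show ?thesis
    unfolding supersol_nzg_def subsol_nzg_def lsc_iff_usc_uminus
  proof (intro iffI conjI ballI allI impI; elim conjE)
    fix x0 r \<phi> p
    assume H: "\<forall>x0\<in>\<Omega>. \<forall>r \<phi> p. 0 < r \<and> C11_at \<phi> x0 p \<and> continuous_on (cball x0 r) \<phi> \<and> p \<noteq> 0 \<and> \<phi> x0 = u x0 \<and>
           (\<forall>x\<in>ball x0 r - {x0}. \<phi> x < u x) \<longrightarrow>
           fraclap_le0 s (\<lambda>x. if x \<in> ball x0 r then \<phi> x else u x) x0 (p /\<^sub>R norm p)"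
      and x0: "x0 \<in> \<Omega>" and c: "0 < r" "C11_at \<phi> x0 p" "continuous_on (cball x0 r) \<phi>" "p \<noteq> 0"
        "\<phi> x0 = - u x0" "\<forall>x\<in>ball x0 r - {x0}. - u x < \<phi> x"
    have "fraclap_le0 s (\<lambda>x. if x \<in> ball x0 r then - \<phi> x else u x) x0 ((-p) /\<^sub>R norm (-p))"
      by (rule H[rule_format, OF x0]) (use c in \<open>auto simp: C11_at_uminus intro!: continuous_on_minus; force\<close>)
    then show "fraclap_ge0 s (\<lambda>x. if x \<in> ball x0 r then \<phi> x else - u x) x0 (p /\<^sub>R norm p)"
      unfolding fraclap_le0_iff_ge0_uminus eq1 eq2 .
  next
    fix x0 r \<phi> p
    assume H: "\<forall>x0\<in>\<Omega>. \<forall>r \<phi> p. 0 < r \<and> C11_at \<phi> x0 p \<and> continuous_on (cball x0 r) \<phi> \<and> p \<noteq> 0 \<and> \<phi> x0 = - u x0 \<and>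
           (\<forall>x\<in>ball x0 r - {x0}. - u x < \<phi> x) \<longrightarrow>
           fraclap_ge0 s (\<lambda>x. if x \<in> ball x0 r then \<phi> x else - u x) x0 (p /\<^sub>R norm p)"
      and x0: "x0 \<in> \<Omega>" and c: "0 < r" "C11_at \<phi> x0 p" "continuous_on (cball x0 r) \<phi>" "p \<noteq> 0"
        "\<phi> x0 = u x0" "\<forall>x\<in>ball x0 r - {x0}. \<phi> x < u x"
    have "fraclap_ge0 s (\<lambda>x. if x \<in> ball x0 r then - \<phi> x else - u x) x0 ((-p) /\<^sub>R norm (-p))"
      by (rule H[rule_format, OF x0]) (use c in \<open>auto simp: C11_at_uminus intro!: continuous_on_minus; force\<close>)
    then show "fraclap_le0 s (\<lambda>x. if x \<in> ball x0 r then \<phi> x else u x) x0 (p /\<^sub>R norm p)"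
      unfolding fraclap_le0_iff_ge0_uminus eq3 by simp
  qed
qed

section \<open>Paraboloids as test functions\<close>

lemma quadratic_expansion:
  fixes p x0 y z :: "'a::real_inner"
  shows "p \<bullet> (y - x0) + K * (norm (y - x0))\<^sup>2
       = p \<bullet> (z - x0) + K * (norm (z - x0))\<^sup>2 + (p + (2 * K) *\<^sub>R (z - x0)) \<bullet> (y - z) + K * (norm (y - z))\<^sup>2"
proof -
  have "y - x0 = (z - x0) + (y - z)" by simp
  then have "(norm (y - x0))\<^sup>2 = (norm (z - x0))\<^sup>2 + 2 * ((z - x0) \<bullet> (y - z)) + (norm (y - z))\<^sup>2"
    by (metis power2_norm_eq_inner inner_add_left inner_add_right inner_commute mult_2 add.assoc)
  then have "K * (norm (y - x0))\<^sup>2 = K * (norm (z - x0))\<^sup>2 + 2 * K * ((z - x0) \<bullet> (y - z)) + K * (norm (y - z))\<^sup>2"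
    by (simp add: ring_distribs mult_ac)
  moreover have "(p + (2 * K) *\<^sub>R (z - x0)) \<bullet> (y - z) = p \<bullet> (y - z) + 2 * K * ((z - x0) \<bullet> (y - z))"
    by (simp add: inner_add_left)
  moreover have "p \<bullet> (y - x0) = p \<bullet> (z - x0) + p \<bullet> (y - z)"
    by (simp add: inner_diff_right)
  ultimately show ?thesis
    by linarith
qed

lemma C11_at_quadratic: "C11_at (\<lambda>y. c + p \<bullet> (y - x) + K * (norm (y - x))\<^sup>2) x p"
  unfolding C11_at_def
proof (intro exI[of _ "\<bar>K\<bar> + 1"] exI[of _ 1] conjI allI impI)
  fix h :: 'a
  show "\<bar>c + p \<bullet> (x + h - x) + K * (norm (x + h - x))\<^sup>2 - (c + p \<bullet> (x - x) + K * (norm (x - x))\<^sup>2) - p \<bullet> h\<bar>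
      \<le> (\<bar>K\<bar> + 1) * (norm h)\<^sup>2"
    by (simp add: abs_mult mult_right_mono)
qed auto

(* The function u~ of the definition of subsolution, for the paraboloid with gradient p and
   Hessian 2K at x as test function. *)
definition quad_glue :: "('a::real_inner \<Rightarrow> real) \<Rightarrow> 'a \<Rightarrow> 'a \<Rightarrow> real \<Rightarrow> real \<Rightarrow> 'a \<Rightarrow> real" where
  "quad_glue w x p K t y = (if y \<in> ball x t then w x + p \<bullet> (y - x) + K * (norm (y - x))\<^sup>2 else w y)"

lemma quad_glue_center: "t > 0 \<Longrightarrow> quad_glue w x p K t x = w x"
  by (simp add: quad_glue_def)

lemma quad_glue_outside: "t \<le> dist y x \<Longrightarrow> quad_glue w x p K t y = w y"
  by (simp add: quad_glue_def dist_commute)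

lemma quad_glue_le:
  assumes "w y \<le> w x + p \<bullet> (y - x) + K * (norm (y - x))\<^sup>2" "K \<le> K'"
  shows "quad_glue w x p K' t y \<le> w x + p \<bullet> (y - x) + K' * (norm (y - x))\<^sup>2"
  using assms mult_right_mono[OF assms(2), of "(norm (y - x))\<^sup>2"] by (auto simp: quad_glue_def)

lemma quad_glue_second_difference_le:
  assumes "t > 0" "K \<le> K'"
    and "w (x + h) \<le> w x + p \<bullet> h + K * (norm h)\<^sup>2"
    and "w (x - h) \<le> w x - p \<bullet> h + K * (norm h)\<^sup>2"
  shows "quad_glue w x p K' t (x + h) + quad_glue w x p K' t (x - h) - 2 * quad_glue w x p K' t x
      \<le> 2 * K' * (norm h)\<^sup>2"
  using quad_glue_le[of w "x + h" x p K K' t] quad_glue_le[of w "x - h" x p K K' t] assms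
  by (simp add: quad_glue_center inner_diff_right)

lemma quad_glue_borel_measurable:
  assumes [measurable]: "w \<in> borel_measurable borel"
  shows "quad_glue w x p K t \<in> borel_measurable borel"
proof -
  have [measurable]: "(\<lambda>y. w x + p \<bullet> (y - x) + K * (norm (y - x))\<^sup>2) \<in> borel_measurable borel"
    by (intro borel_measurable_continuous_onI continuous_intros)
  have [measurable]: "ball x t \<in> sets borel"
    by (rule borel_open) simp
  show ?thesis
    unfolding quad_glue_def[abs_def] by measurable
qed

lemma subsol_nzg_quad_glue:
  assumes "subsol_nzg s \<Omega> w" "x \<in> \<Omega>" "t > 0" "p \<noteq> 0" "K < K'"
    and "\<And>y. y \<in> ball x t \<Longrightarrow> w y \<le> w x + p \<bullet> (y - x) + K * (norm (y - x))\<^sup>2"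
  shows "fraclap_ge0 s (quad_glue w x p K' t) x (p /\<^sub>R norm p)"
proof -
  have strict: "\<forall>y\<in>ball x t - {x}. w y < w x + p \<bullet> (y - x) + K' * (norm (y - x))\<^sup>2"
  proof
    fix y assume y: "y \<in> ball x t - {x}"
    then have "K * (norm (y - x))\<^sup>2 < K' * (norm (y - x))\<^sup>2"
      using assms(5) by (intro mult_strict_right_mono) auto
    moreover have "w y \<le> w x + p \<bullet> (y - x) + K * (norm (y - x))\<^sup>2" using assms(6) y by blast
    ultimately show "w y < w x + p \<bullet> (y - x) + K' * (norm (y - x))\<^sup>2"
      by linarith
  qed
  show ?thesis
    unfolding quad_glue_def[abs_def]
    by (rule assms(1)[unfolded subsol_nzg_def, THEN conjunct2, rule_format, OF assms(2)])
      (use assms(3,4) strict in \<open>auto intro!: C11_at_quadratic continuous_intros\<close>)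
qed

section \<open>Passage to the limit\<close>

lemma frac_integrand_le_near:
  assumes "\<eta> > 0" "w (x + \<eta> *\<^sub>R v) + w (x - \<eta> *\<^sub>R v) - 2 * w x \<le> K * \<eta>\<^sup>2"
  shows "frac_integrand s w x v \<eta> \<le> K * \<eta> powr (1 - 2 * s)"
proof -
  have "frac_integrand s w x v \<eta> \<le> K * \<eta> powr 2 / \<eta> powr (1 + 2 * s)"
    unfolding frac_integrand_def using assms by (simp add: divide_right_mono powr_realpow)
  also have "\<dots> = K * \<eta> powr (1 - 2 * s)"
    using powr_diff[of \<eta> 2 "1 + 2 * s"] by (simp add: algebra_simps)
  finally show ?thesis .
qed

lemma growth_le_powr:
  fixes y :: "'a::real_normed_vector"
  assumes "0 < a" "a \<le> \<eta>" "0 \<le> R" "norm y \<le> R + \<eta>"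
  shows "(1 + norm y) powr \<alpha> \<le> ((1 + R + a) / a) powr max \<alpha> 0 * \<eta> powr max \<alpha> 0"
proof -
  have "(1 + R) * a \<le> (1 + R) * \<eta>"
    using assms by (intro mult_left_mono) auto
  then have "1 + R + \<eta> \<le> (1 + R + a) / a * \<eta>"
    using assms(1) by (simp add: field_simps ring_distribs)
  then have "(1 + norm y) powr \<alpha> \<le> ((1 + R + a) / a * \<eta>) powr max \<alpha> 0"
    using assms by (intro order.trans[OF powr_mono powr_mono2]) auto
  also have "\<dots> = ((1 + R + a) / a) powr max \<alpha> 0 * \<eta> powr max \<alpha> 0"
    using assms by (intro powr_mult)
  finally show ?thesis .
qed

lemma frac_integrand_le_far:
  assumes "0 < a" "a \<le> \<eta>" "norm v = 1" "norm x \<le> R" "0 \<le> C"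
    and growth: "\<And>y. y = x \<or> a \<le> dist y x \<Longrightarrow> \<bar>w y\<bar> \<le> C * (1 + norm y) powr \<alpha>"
  shows "frac_integrand s w x v \<eta>
      \<le> 4 * C * ((1 + R + a) / a) powr max \<alpha> 0 * \<eta> powr (max \<alpha> 0 - 1 - 2 * s)"
proof -
  have "0 \<le> R" using assms(4) norm_ge_zero[of x] by linarith
  define B where "B = C * (((1 + R + a) / a) powr max \<alpha> 0 * \<eta> powr max \<alpha> 0)"
  have bound: "\<bar>w y\<bar> \<le> B" if "y = x \<or> a \<le> dist y x" "norm y \<le> R + \<eta>" for y
  proof -
    have "C * (1 + norm y) powr \<alpha> \<le> B"
      unfolding B_def using assms that \<open>0 \<le> R\<close>
      by (intro mult_left_mono growth_le_powr) auto
    then show ?thesis using growth[OF that(1)] by linarith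
  qed
  have "\<bar>w (x + \<eta> *\<^sub>R v)\<bar> \<le> B" "\<bar>w (x - \<eta> *\<^sub>R v)\<bar> \<le> B" "\<bar>w x\<bar> \<le> B"
    using assms norm_triangle_ineq[of x "\<eta> *\<^sub>R v"] norm_triangle_ineq4[of x "\<eta> *\<^sub>R v"]
    by (auto intro!: bound simp: dist_norm)
  then have "w (x + \<eta> *\<^sub>R v) + w (x - \<eta> *\<^sub>R v) - 2 * w x \<le> 4 * B"
    by (simp add: abs_le_iff)
  then have "frac_integrand s w x v \<eta> \<le> 4 * B / \<eta> powr (1 + 2 * s)"
    unfolding frac_integrand_def by (simp add: divide_right_mono)
  also have "\<dots> = 4 * C * ((1 + R + a) / a) powr max \<alpha> 0 * \<eta> powr (max \<alpha> 0 - 1 - 2 * s)"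
    using powr_diff[of \<eta> "max \<alpha> 0" "1 + 2 * s"] unfolding B_def by (simp add: algebra_simps)
  finally show ?thesis .
qed

lemma frac_integrand_limsup_le:
  fixes W :: "nat \<Rightarrow> 'a::euclidean_space \<Rightarrow> real"
  assumes "usc g" "\<And>y. g y \<le> w y" "X \<longlonglongrightarrow> x" "V \<longlonglongrightarrow> v" "\<eta> > 0" "e > 0"
    and center: "\<And>e. e > 0 \<Longrightarrow> \<forall>\<^sub>F n in sequentially. w x - e < W n (X n)"
    and off_center: "\<And>e. e > 0 \<Longrightarrow> \<forall>\<^sub>F n in sequentially. \<forall>y. \<eta> \<le> dist y (X n) \<longrightarrow> W n y < g y + e"
    and "\<forall>\<^sub>F n in sequentially. norm (V n) = 1"
  shows "\<forall>\<^sub>F n in sequentially. frac_integrand s (W n) (X n) (V n) \<eta> < frac_integrand s w x v \<eta> + e"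
proof -
  define q where "q = \<eta> powr (1 + 2 * s)"
  have q: "q > 0" using assms(5) by (simp add: q_def)
  define e' where "e' = e * q / 6"
  have e': "e' > 0" using assms(6) q by (simp add: e'_def)
  have "(\<lambda>n. X n + \<eta> *\<^sub>R V n) \<longlonglongrightarrow> x + \<eta> *\<^sub>R v" "(\<lambda>n. X n - \<eta> *\<^sub>R V n) \<longlonglongrightarrow> x - \<eta> *\<^sub>R v"
    using assms(3,4) by (auto intro!: tendsto_intros)
  then have "\<forall>\<^sub>F n in sequentially. g (X n + \<eta> *\<^sub>R V n) < g (x + \<eta> *\<^sub>R v) + e'"
    "\<forall>\<^sub>F n in sequentially. g (X n - \<eta> *\<^sub>R V n) < g (x - \<eta> *\<^sub>R v) + e'"
    using usc_tendsto_less[OF assms(1) _ e'] by auto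
  with center[OF e'] off_center[OF e'] assms(9)
  show ?thesis
  proof eventually_elim
    case (elim n)
    have "\<eta> \<le> dist (X n + \<eta> *\<^sub>R V n) (X n)" "\<eta> \<le> dist (X n - \<eta> *\<^sub>R V n) (X n)"
      using elim(3) assms(5) by (simp_all add: dist_norm)
    then have "W n (X n + \<eta> *\<^sub>R V n) < g (X n + \<eta> *\<^sub>R V n) + e'"
      "W n (X n - \<eta> *\<^sub>R V n) < g (X n - \<eta> *\<^sub>R V n) + e'"
      using elim(2) by auto
    then have "W n (X n + \<eta> *\<^sub>R V n) + W n (X n - \<eta> *\<^sub>R V n) - 2 * W n (X n)
        < w (x + \<eta> *\<^sub>R v) + w (x - \<eta> *\<^sub>R v) - 2 * w x + e * q" (is "?A < ?B + e * q")
      using elim(1,4,5) assms(2)[of "x + \<eta> *\<^sub>R v"] assms(2)[of "x - \<eta> *\<^sub>R v"]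
      unfolding e'_def by linarith
    then have "?A / q < (?B + e * q) / q"
      using q by (rule divide_strict_right_mono)
    also have "\<dots> = ?B / q + e"
      using q by (simp add: add_divide_distrib)
    finally show ?case
      unfolding frac_integrand_def q_def .
  qed
qed

lemma frac_integrand_le_dominant:
  assumes "0 < a" "0 < \<eta>" "norm v = 1" "norm x \<le> R" "0 \<le> C" "0 \<le> K"
    and near: "\<eta> < a \<Longrightarrow> w (x + \<eta> *\<^sub>R v) + w (x - \<eta> *\<^sub>R v) - 2 * w x \<le> K * \<eta>\<^sup>2"
    and far: "\<And>y. y = x \<or> a \<le> dist y x \<Longrightarrow> \<bar>w y\<bar> \<le> C * (1 + norm y) powr \<alpha>"
  shows "frac_integrand s w x v \<eta> \<le> K * \<eta> powr (1 - 2 * s) * indicator {0..a} \<eta>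
      + 4 * C * ((1 + R + a) / a) powr max \<alpha> 0 * \<eta> powr (max \<alpha> 0 - 1 - 2 * s) * indicator {a..} \<eta>"
proof (cases "\<eta> < a")
  case True
  have "frac_integrand s w x v \<eta> \<le> K * \<eta> powr (1 - 2 * s)"
    using assms(2) near[OF True] by (rule frac_integrand_le_near)
  then show ?thesis
    using True assms(2,5) by (simp add: indicator_def)
next
  case False
  then have "frac_integrand s w x v \<eta> \<le> 4 * C * ((1 + R + a) / a) powr max \<alpha> 0 * \<eta> powr (max \<alpha> 0 - 1 - 2 * s)"
    using assms(1,3-5) far by (intro frac_integrand_le_far) auto
  moreover have "0 \<le> K * \<eta> powr (1 - 2 * s) * indicator {0..a} \<eta>"
    using assms(6) by simp
  ultimately show ?thesis
    using False by (simp add: indicator_def)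
qed

lemma fraclap_ge0_limit:
  fixes W :: "nat \<Rightarrow> 'a::euclidean_space \<Rightarrow> real"
  assumes s: "0 < s" "s < 1" and "\<alpha> < 2 * s" "0 \<le> C" "0 \<le> K" "0 < a"
    and "usc g" "\<And>y. g y \<le> w y" and X: "X \<longlonglongrightarrow> x" and "V \<longlonglongrightarrow> v"
    and meas: "\<And>n. W n \<in> borel_measurable borel"
    and ge0: "\<forall>\<^sub>F n in sequentially. norm (V n) = 1 \<and> fraclap_ge0 s (W n) (X n) (V n)"
    and near: "\<forall>\<^sub>F n in sequentially. \<forall>\<eta>. 0 < \<eta> \<and> \<eta> < a \<longrightarrow>
        W n (X n + \<eta> *\<^sub>R V n) + W n (X n - \<eta> *\<^sub>R V n) - 2 * W n (X n) \<le> K * \<eta>\<^sup>2"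
    and far: "\<forall>\<^sub>F n in sequentially. \<forall>y. y = X n \<or> a \<le> dist y (X n) \<longrightarrow>
        \<bar>W n y\<bar> \<le> C * (1 + norm y) powr \<alpha>"
    and center: "\<And>e. e > 0 \<Longrightarrow> \<forall>\<^sub>F n in sequentially. w x - e < W n (X n)"
    and off_center: "\<And>\<eta> e. \<eta> > 0 \<Longrightarrow> e > 0 \<Longrightarrow>
        \<forall>\<^sub>F n in sequentially. \<forall>y. \<eta> \<le> dist y (X n) \<longrightarrow> W n y < g y + e"
  shows "fraclap_ge0 s w x v"
proof -
  define R where "R = norm x + 1"
  define B where "B = 4 * C * ((1 + R + a) / a) powr max \<alpha> 0"
  define H where "H \<eta> = K * \<eta> powr (1 - 2 * s) * indicator {0..a} \<eta>
      + B * \<eta> powr (max \<alpha> 0 - 1 - 2 * s) * indicator {a..} \<eta>" for \<eta>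
  have "B \<ge> 0" using assms(4) by (simp add: B_def)
  have "\<forall>\<^sub>F n in sequentially. norm (X n) < R"
    unfolding R_def by (rule order_tendstoD(2)[OF tendsto_norm[OF X]]) simp
  with ge0 near far have dominated:
    "\<forall>\<^sub>F n in sequentially. \<forall>\<eta>>0. frac_integrand s (W n) (X n) (V n) \<eta> \<le> H \<eta>"
    unfolding H_def B_def
  proof eventually_elim
    case (elim n)
    then show ?case
      using assms(4-6) by (auto intro!: frac_integrand_le_dominant)
  qed
  have "(\<integral>\<^sup>+ \<eta>\<in>{0<..}. ennreal (- frac_integrand s w x v \<eta>) \<partial>lborel) < \<infinity> \<and>
        (\<integral>\<^sup>+ \<eta>\<in>{0<..}. ennreal (- frac_integrand s w x v \<eta>) \<partial>lborel)
          \<le> (\<integral>\<^sup>+ \<eta>\<in>{0<..}. ennreal (frac_integrand s w x v \<eta>) \<partial>lborel)"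
  proof (rule neg_le_pos_integral_upper_limit[OF _ _ _ dominated])
    show "(\<lambda>\<eta>. frac_integrand s (W n) (X n) (V n) \<eta>) \<in> borel_measurable borel" for n
      using meas[of n] unfolding frac_integrand_def by measurable
    show "H \<in> borel_measurable borel"
      unfolding H_def by measurable
    show "(\<integral>\<^sup>+ \<eta>\<in>{0<..}. ennreal (H \<eta>) \<partial>lborel) < \<infinity>"
      unfolding H_def using s assms(3,5,6) \<open>B \<ge> 0\<close> by (intro nn_integral_powr_pieces_finite) auto
    show "\<forall>\<^sub>F n in sequentially. frac_integrand s (W n) (X n) (V n) \<eta> < frac_integrand s w x v \<eta> + e"
      if "\<eta> > 0" "e > 0" for \<eta> e
      using ge0 by (intro frac_integrand_limsup_le[OF assms(7,8) X assms(10) that center off_center[OF that(1)]])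
        (auto elim: eventually_mono)
    show "\<forall>\<^sub>F n in sequentially.
        (\<integral>\<^sup>+ \<eta>\<in>{0<..}. ennreal (- frac_integrand s (W n) (X n) (V n) \<eta>) \<partial>lborel)
          \<le> (\<integral>\<^sup>+ \<eta>\<in>{0<..}. ennreal (frac_integrand s (W n) (X n) (V n) \<eta>) \<partial>lborel)"
      using ge0 by (rule eventually_mono) (simp add: fraclap_ge0_def fraclap_neg_def fraclap_pos_def)
  qed
  then show ?thesis
    by (simp add: fraclap_ge0_def fraclap_neg_def fraclap_pos_def)
qed

lemma maximizers_tendsto:
  fixes f :: "nat \<Rightarrow> 'a::real_normed_vector \<Rightarrow> real"
  assumes lim: "uniform_limit K f g sequentially" and "x0 \<in> K" "g x0 = 0"
    and strict_max: "\<And>y. y \<in> K \<Longrightarrow> g y \<le> - (norm (y - x0))\<^sup>2"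
    and "\<And>n. X n \<in> K" and max: "\<And>n y. y \<in> K \<Longrightarrow> f n y \<le> f n (X n)"
  shows "X \<longlonglongrightarrow> x0" and "(\<lambda>n. f n (X n)) \<longlonglongrightarrow> 0"
proof -
  have close: "\<forall>\<^sub>F n in sequentially. (norm (X n - x0))\<^sup>2 < 2 * d \<and> \<bar>f n (X n)\<bar> < d" if "d > 0" for d
    using lim[unfolded uniform_limit_iff, rule_format, OF that]
  proof eventually_elim
    case (elim n)
    then have "- d < f n x0" "f n (X n) - g (X n) < d"
      using assms(2,3,5) by (auto simp: dist_real_def abs_less_iff)
    moreover have "f n x0 \<le> f n (X n)" "g (X n) \<le> - (norm (X n - x0))\<^sup>2" "0 \<le> (norm (X n - x0))\<^sup>2"
      using max[OF assms(2), of n] strict_max[OF assms(5)[of n]] by auto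
    ultimately show ?case
      unfolding abs_less_iff by (intro conjI) linarith+
  qed
  show "X \<longlonglongrightarrow> x0"
  proof (rule tendstoI)
    fix e :: real assume "e > 0"
    then show "\<forall>\<^sub>F n in sequentially. dist (X n) x0 < e"
      using close[of "e\<^sup>2 / 2"] by (auto elim!: eventually_mono simp: dist_norm power_less_imp_less_base)
  qed
  show "(\<lambda>n. f n (X n)) \<longlonglongrightarrow> 0"
    by (rule tendstoI) (auto elim!: eventually_mono[OF close] simp: dist_real_def)
qed

lemma uniform_limit_perturbed_maxima:
  fixes u :: "nat \<Rightarrow> 'a::euclidean_space \<Rightarrow> real"
  assumes usc: "\<And>n. usc (u n)" and lim: "uniform_limit UNIV u u0 sequentially" and "\<rho> > 0"
    and above: "\<And>y. y \<in> cball x0 \<rho> \<Longrightarrow> u0 y \<le> u0 x0 + p \<bullet> (y - x0) + K * (norm (y - x0))\<^sup>2"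
  obtains X where "\<And>n. X n \<in> cball x0 \<rho>" "X \<longlonglongrightarrow> x0" "(\<lambda>n. u n (X n)) \<longlonglongrightarrow> u0 x0"
    "\<And>n y. y \<in> cball x0 \<rho> \<Longrightarrow>
       u n y \<le> u n (X n) + (p + (2 * (K + 1)) *\<^sub>R (X n - x0)) \<bullet> (y - X n) + (K + 1) * (norm (y - X n))\<^sup>2"
proof -
  define \<psi> where "\<psi> y = p \<bullet> (y - x0) + (K + 1) * (norm (y - x0))\<^sup>2" for y
  have "continuous_on UNIV \<psi>"
    unfolding \<psi>_def by (intro continuous_intros)
  then have "\<exists>z\<in>cball x0 \<rho>. \<forall>y\<in>cball x0 \<rho>. u n y - \<psi> y \<le> u n z - \<psi> z" for n
    using \<open>\<rho> > 0\<close> by (intro usc_attains_max usc_diff_continuous usc) auto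
  then obtain X where X: "\<And>n. X n \<in> cball x0 \<rho>"
    and max: "\<And>n y. y \<in> cball x0 \<rho> \<Longrightarrow> u n y - \<psi> y \<le> u n (X n) - \<psi> (X n)"
    by metis
  have lim': "uniform_limit (cball x0 \<rho>) (\<lambda>n y. u n y - \<psi> y - u0 x0) (\<lambda>y. u0 y - \<psi> y - u0 x0) sequentially"
    using lim by (intro uniform_limit_intros) (auto intro: uniform_limit_on_subset)
  have strict: "u0 y - \<psi> y - u0 x0 \<le> - (norm (y - x0))\<^sup>2" if "y \<in> cball x0 \<rho>" for y
    using above[OF that] unfolding \<psi>_def by (simp add: algebra_simps)
  have max': "u n y - \<psi> y - u0 x0 \<le> u n (X n) - \<psi> (X n) - u0 x0" if "y \<in> cball x0 \<rho>" for n y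
    using max[OF that] by simp
  have "x0 \<in> cball x0 \<rho>" "u0 x0 - \<psi> x0 - u0 x0 = 0"
    using \<open>\<rho> > 0\<close> by (simp_all add: \<psi>_def)
  note conv = maximizers_tendsto[OF lim' this strict X max']
  moreover have "(\<lambda>n. \<psi> (X n)) \<longlonglongrightarrow> \<psi> x0"
    using \<open>continuous_on UNIV \<psi>\<close> conv(1) by (simp add: continuous_on_tendsto_compose)
  with conv(2) have "(\<lambda>n. (u n (X n) - \<psi> (X n) - u0 x0) + \<psi> (X n) + u0 x0) \<longlonglongrightarrow> 0 + \<psi> x0 + u0 x0"
    by (intro tendsto_intros)
  then have "(\<lambda>n. u n (X n)) \<longlonglongrightarrow> u0 x0"
    by (simp add: \<psi>_def)
  moreover have "u n y \<le> u n (X n) + (p + (2 * (K + 1)) *\<^sub>R (X n - x0)) \<bullet> (y - X n) + (K + 1) * (norm (y - X n))\<^sup>2"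
    if "y \<in> cball x0 \<rho>" for n y
    using max[OF that, of n] quadratic_expansion[of p y x0 "K + 1" "X n"] unfolding \<psi>_def by linarith
  ultimately show ?thesis
    using that X conv(1) by blast
qed

lemma C11_at_touching_above:
  assumes "open \<Omega>" "x0 \<in> \<Omega>" "0 < r" "C11_at \<phi> x0 p" "\<phi> x0 = u x0"
    and touch: "\<forall>x\<in>ball x0 r - {x0}. u x < \<phi> x"
  obtains \<rho> M where "\<rho> > 0" "cball x0 \<rho> \<subseteq> \<Omega>" "M > 0"
    "\<And>y. y \<in> cball x0 \<rho> \<Longrightarrow> u y \<le> u x0 + p \<bullet> (y - x0) + M * (norm (y - x0))\<^sup>2"
proof -
  obtain M \<eta>0 where "\<eta>0 > 0" "M > 0"
    and C11: "\<And>h. norm h < \<eta>0 \<Longrightarrow> \<bar>\<phi> (x0 + h) - \<phi> x0 - p \<bullet> h\<bar> \<le> M * (norm h)\<^sup>2"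
    using \<open>C11_at \<phi> x0 p\<close> unfolding C11_at_def by blast
  obtain \<rho>0 where "\<rho>0 > 0" "cball x0 \<rho>0 \<subseteq> \<Omega>"
    using \<open>open \<Omega>\<close> \<open>x0 \<in> \<Omega>\<close> open_contains_cball by blast
  define \<rho> where "\<rho> = min \<rho>0 (min r \<eta>0) / 2"
  have "\<rho> > 0" "\<rho> < r" "\<rho> < \<eta>0" "\<rho> \<le> \<rho>0"
    unfolding \<rho>_def using \<open>\<rho>0 > 0\<close> \<open>0 < r\<close> \<open>\<eta>0 > 0\<close> by auto
  have "u y \<le> u x0 + p \<bullet> (y - x0) + M * (norm (y - x0))\<^sup>2" if "y \<in> cball x0 \<rho>" for y
  proof -
    have "u y \<le> \<phi> y"
      using touch \<open>\<phi> x0 = u x0\<close> that \<open>\<rho> < r\<close> by (cases "y = x0") force+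
    moreover have "norm (y - x0) < \<eta>0"
      using that \<open>\<rho> < \<eta>0\<close> by (simp add: dist_norm norm_minus_commute)
    ultimately show ?thesis
      using C11[of "y - x0"] \<open>\<phi> x0 = u x0\<close> by simp
  qed
  moreover have "cball x0 \<rho> \<subseteq> \<Omega>"
    using subset_cball[OF \<open>\<rho> \<le> \<rho>0\<close>] \<open>cball x0 \<rho>0 \<subseteq> \<Omega>\<close> by blast
  ultimately show ?thesis
    using that \<open>\<rho> > 0\<close> \<open>M > 0\<close> by blast
qed

lemma fraclap_ge0_quad_glue_limit:
  fixes u :: "nat \<Rightarrow> 'a::euclidean_space \<Rightarrow> real"
  assumes s: "0 < s" "s < 1" and "\<alpha> < 2 * s" "0 \<le> C" "0 \<le> K" "K \<le> K'" "0 < a"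
    and "usc g" "\<And>y. g y \<le> w y" and X: "X \<longlonglongrightarrow> x" and P: "P \<longlonglongrightarrow> p" "p \<noteq> 0"
    and t: "\<And>n. 0 < t n" "t \<longlonglongrightarrow> 0"
    and meas: "\<And>n. u n \<in> borel_measurable borel"
    and growth: "\<And>n y. \<bar>u n y\<bar> \<le> C * (1 + norm y) powr \<alpha>"
    and ge0: "\<forall>\<^sub>F n in sequentially. fraclap_ge0 s (quad_glue (u n) (X n) (P n) K' (t n)) (X n) (P n /\<^sub>R norm (P n))"
    and touch: "\<forall>\<^sub>F n in sequentially. \<forall>y\<in>ball (X n) a.
        u n y \<le> u n (X n) + P n \<bullet> (y - X n) + K * (norm (y - X n))\<^sup>2"
    and center: "(\<lambda>n. u n (X n)) \<longlonglongrightarrow> w x"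
    and unif: "\<And>e. e > 0 \<Longrightarrow> \<forall>\<^sub>F n in sequentially. \<forall>y. u n y < g y + e"
  shows "fraclap_ge0 s w x (p /\<^sub>R norm p)"
proof -
  define W where "W n = quad_glue (u n) (X n) (P n) K' (t n)" for n
  define V where "V n = P n /\<^sub>R norm (P n)" for n
  have W_eq: "\<forall>\<^sub>F n in sequentially. \<forall>y. \<eta> \<le> dist y (X n) \<longrightarrow> W n y = u n y" if "\<eta> > 0" for \<eta>
    using order_tendstoD(2)[OF t(2) that] unfolding W_def
    by eventually_elim (auto intro: quad_glue_outside)
  have "V \<longlonglongrightarrow> p /\<^sub>R norm p"
    unfolding V_def using P by (auto intro!: tendsto_eq_intros)
  have unit: "\<forall>\<^sub>F n in sequentially. norm (V n) = 1"
    using tendsto_imp_eventually_ne[OF P] by eventually_elim (simp add: V_def)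
  show ?thesis
  proof (rule fraclap_ge0_limit[OF s \<open>\<alpha> < 2 * s\<close> \<open>0 \<le> C\<close> _ \<open>0 < a\<close> \<open>usc g\<close> assms(9) X
        \<open>V \<longlonglongrightarrow> p /\<^sub>R norm p\<close>, where W = W and K = "2 * K'"])
    show "W n \<in> borel_measurable borel" for n
      unfolding W_def by (intro quad_glue_borel_measurable meas)
    show "\<forall>\<^sub>F n in sequentially. norm (V n) = 1 \<and> fraclap_ge0 s (W n) (X n) (V n)"
      using unit ge0 by eventually_elim (simp add: W_def V_def)
    show "\<forall>\<^sub>F n in sequentially. \<forall>\<eta>. 0 < \<eta> \<and> \<eta> < a \<longrightarrow>
        W n (X n + \<eta> *\<^sub>R V n) + W n (X n - \<eta> *\<^sub>R V n) - 2 * W n (X n) \<le> 2 * K' * \<eta>\<^sup>2"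
      using unit touch
    proof eventually_elim
      case (elim n)
      have "W n (X n + \<eta> *\<^sub>R V n) + W n (X n - \<eta> *\<^sub>R V n) - 2 * W n (X n)
          \<le> 2 * K' * (norm (\<eta> *\<^sub>R V n))\<^sup>2" if "0 < \<eta>" "\<eta> < a" for \<eta>
        unfolding W_def using elim(2)[rule_format, of "X n + \<eta> *\<^sub>R V n"] elim(2)[rule_format, of "X n - \<eta> *\<^sub>R V n"]
        by (intro quad_glue_second_difference_le[where K = K] t(1) \<open>K \<le> K'\<close>)
          (use elim(1) that in \<open>simp_all add: dist_norm\<close>)
      then show ?case
        using elim(1) by simp
    qed
    show "\<forall>\<^sub>F n in sequentially. \<forall>y. y = X n \<or> a \<le> dist y (X n) \<longrightarrow> \<bar>W n y\<bar> \<le> C * (1 + norm y) powr \<alpha>"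
      using W_eq[OF \<open>0 < a\<close>] by eventually_elim (auto simp: W_def quad_glue_center t(1) growth)
    show "\<forall>\<^sub>F n in sequentially. w x - e < W n (X n)" if "e > 0" for e
      using order_tendstoD(1)[OF center, of "w x - e"] that by (simp add: W_def quad_glue_center t(1))
    show "\<forall>\<^sub>F n in sequentially. \<forall>y. \<eta> \<le> dist y (X n) \<longrightarrow> W n y < g y + e"
      if "\<eta> > 0" "e > 0" for \<eta> e
      using W_eq[OF that(1)] unif[OF that(2)] by eventually_elim auto
  qed (use assms(5,6) in simp)
qed

lemma subsol_nzg_uniform_limit:
  fixes u :: "nat \<Rightarrow> 'a::euclidean_space \<Rightarrow> real"
  assumes s: "0 < s" "s < 1" and "open \<Omega>" and lim: "uniform_limit UNIV u u0 sequentially"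
    and "\<alpha> < 2 * s" "0 \<le> C" and growth: "\<And>n x. \<bar>u n x\<bar> \<le> C * (1 + norm x) powr \<alpha>"
    and sub: "\<And>n. subsol_nzg s \<Omega> (u n)"
  shows "subsol_nzg s \<Omega> u0"
  unfolding subsol_nzg_def
proof (intro conjI ballI allI impI; (elim conjE)?)
  have usc: "usc (u n)" for n
    using sub unfolding subsol_nzg_def by blast
  then show usc0: "usc u0"
    using lim by (rule usc_uniform_limit)
  fix x0 r \<phi> p
  assume "x0 \<in> \<Omega>" "0 < r" "C11_at \<phi> x0 p" "p \<noteq> 0" "\<phi> x0 = u0 x0"
    and \<phi>_above: "\<forall>x\<in>ball x0 r - {x0}. u0 x < \<phi> x"
  obtain \<rho> M where "\<rho> > 0" "cball x0 \<rho> \<subseteq> \<Omega>" "M > 0"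
    and above: "\<And>y. y \<in> cball x0 \<rho> \<Longrightarrow> u0 y \<le> u0 x0 + p \<bullet> (y - x0) + M * (norm (y - x0))\<^sup>2"
    using C11_at_touching_above[OF \<open>open \<Omega>\<close> \<open>x0 \<in> \<Omega>\<close> \<open>0 < r\<close> \<open>C11_at \<phi> x0 p\<close> \<open>\<phi> x0 = u0 x0\<close> \<phi>_above]
    by blast
  obtain X where X: "\<And>n. X n \<in> cball x0 \<rho>" "X \<longlonglongrightarrow> x0" "(\<lambda>n. u n (X n)) \<longlonglongrightarrow> u0 x0"
    and touch: "\<And>n y. y \<in> cball x0 \<rho> \<Longrightarrow>
       u n y \<le> u n (X n) + (p + (2 * (M + 1)) *\<^sub>R (X n - x0)) \<bullet> (y - X n) + (M + 1) * (norm (y - X n))\<^sup>2"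
    using uniform_limit_perturbed_maxima[OF usc lim \<open>\<rho> > 0\<close> above] by blast
  define P where "P n = p + (2 * (M + 1)) *\<^sub>R (X n - x0)" for n
  define t where "t n = min (\<rho> / 2) (1 / Suc n)" for n
  have t: "0 < t n" "t n \<le> \<rho> / 2" for n
    using \<open>\<rho> > 0\<close> by (auto simp: t_def)
  have "t \<longlonglongrightarrow> 0"
    unfolding t_def using tendsto_min[OF tendsto_const LIMSEQ_Suc[OF lim_1_over_n], of "\<rho> / 2"] \<open>\<rho> > 0\<close>
    by simp
  have "P \<longlonglongrightarrow> p"
    unfolding P_def using X(2) by (auto intro!: tendsto_eq_intros)
  have touch_near: "\<forall>\<^sub>F n in sequentially. \<forall>y\<in>ball (X n) (\<rho> / 2).
      u n y \<le> u n (X n) + P n \<bullet> (y - X n) + (M + 1) * (norm (y - X n))\<^sup>2"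
    using tendstoD[OF X(2) half_gt_zero[OF \<open>\<rho> > 0\<close>]]
  proof eventually_elim
    case (elim n)
    then have "ball (X n) (\<rho> / 2) \<subseteq> cball x0 \<rho>"
      by (intro order.trans[OF ball_subset_cball]) (simp add: cball_subset_cball_iff dist_commute)
    then show ?case
      using touch unfolding P_def by blast
  qed
  show "fraclap_ge0 s (\<lambda>x. if x \<in> ball x0 r then \<phi> x else u0 x) x0 (p /\<^sub>R norm p)"
  proof (rule fraclap_ge0_quad_glue_limit[OF s \<open>\<alpha> < 2 * s\<close> \<open>0 \<le> C\<close> _ _ half_gt_zero[OF \<open>\<rho> > 0\<close>]
        usc0 _ X(2) \<open>P \<longlonglongrightarrow> p\<close> \<open>p \<noteq> 0\<close> t(1) \<open>t \<longlonglongrightarrow> 0\<close> _ growth _ touch_near])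
    show "u0 y \<le> (if y \<in> ball x0 r then \<phi> y else u0 y)" for y
      using \<phi>_above \<open>\<phi> x0 = u0 x0\<close> by (cases "y = x0") (auto simp: less_imp_le)
    show "\<forall>\<^sub>F n in sequentially. fraclap_ge0 s (quad_glue (u n) (X n) (P n) (M + 2) (t n)) (X n) (P n /\<^sub>R norm (P n))"
      using touch_near tendsto_imp_eventually_ne[OF \<open>P \<longlonglongrightarrow> p\<close> \<open>p \<noteq> 0\<close>]
    proof eventually_elim
      case (elim n)
      have "ball (X n) (t n) \<subseteq> ball (X n) (\<rho> / 2)"
        using t(2) by (rule subset_ball)
      then show ?case
        using elim t(1) X(1) \<open>cball x0 \<rho> \<subseteq> \<Omega>\<close> by (intro subsol_nzg_quad_glue[OF sub]) auto
    qed
    show "\<forall>\<^sub>F n in sequentially. \<forall>y. u n y < u0 y + e" if "e > 0" for e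
      using lim[unfolded uniform_limit_iff, rule_format, OF that]
      by eventually_elim (simp add: dist_real_def abs_less_iff algebra_simps)
  qed (use \<open>M > 0\<close> X(3) \<open>0 < r\<close> \<open>\<phi> x0 = u0 x0\<close> usc in \<open>auto intro: usc_borel_measurable\<close>)
qed

theorem theorem3p10:
  fixes s :: real and \<Omega> :: "'a::euclidean_space set"
    and u :: "nat \<Rightarrow> 'a \<Rightarrow> real" and u0 :: "'a \<Rightarrow> real"
  assumes "1/2 < s" and "s < 1"
    and "open \<Omega>"
    and "uniform_limit UNIV u u0 sequentially"
    and "\<exists>\<alpha> C. \<alpha> < 2 * s \<and> C > 0 \<and> (\<forall>n x. \<bar>u n x\<bar> \<le> C * (1 + norm x) powr \<alpha>)"
  shows "((\<forall>n. subsol_nzg s \<Omega> (u n)) \<longrightarrow> subsol_nzg s \<Omega> u0) \<and>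
         ((\<forall>n. supersol_nzg s \<Omega> (u n)) \<longrightarrow> supersol_nzg s \<Omega> u0)"
proof -
  obtain \<alpha> C where \<alpha>: "\<alpha> < 2 * s" "C > 0" and growth: "\<And>n x. \<bar>u n x\<bar> \<le> C * (1 + norm x) powr \<alpha>"
    using assms(5) by blast
  have s: "0 < s" "s < 1" using assms(1,2) by auto
  have "uniform_limit UNIV (\<lambda>n x. - u n x) (\<lambda>x. - u0 x) sequentially"
    using uniform_limit_uminus[OF assms(4)] by simp
  moreover have "\<bar>- u n x\<bar> \<le> C * (1 + norm x) powr \<alpha>" for n x
    using growth[of n x] by simp
  ultimately show ?thesis
    unfolding supersol_nzg_iff_subsol_nzg_uminus
    using subsol_nzg_uniform_limit[OF s assms(3,4) \<alpha>(1) less_imp_le[OF \<alpha>(2)] growth]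
      subsol_nzg_uniform_limit[OF s assms(3) _ \<alpha>(1) less_imp_le[OF \<alpha>(2)]]
    by blast
qed

end
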